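(* For every $n > 3$, the set $\{d_n\}$ is not equidistributed.
   Context: A linear arrangement of $\{1,\ldots,n\}$ is a sequence $a_1\cdots a_n$ in which each of $1,\ldots,n$ appears exactly once. It contains the pattern $ij$ if $a_t=i$ and $a_{t+1}=j$ for some $t$; otherwise it avoids it. $\{d_n\}$ is the set of linear arrangements of $\{1,\ldots,n\}$ avoiding all of the patterns $12, 23, \ldots, (n-1)n$. For a set $X$ of linear arrangements of $\{1,\ldots,n\}$ and $i\in\{1,\ldots,n\}$, the class $X^{(i)}$ is the set of arrangements in $X$ whose first entry is $i$. $X$ is called equidistributed if it is partitioned into its nonempty classes and all nonempty classes $X^{(i)}$ have the same cardinality. *)

theory Defs
  imports Main
begin

definition linear_arrangement :: "nat \<Rightarrow> nat list \<Rightarrow> bool" where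
  "linear_arrangement n a \<longleftrightarrow> distinct a \<and> set a = {1..n}"

definition contains_pattern :: "nat list \<Rightarrow> nat \<Rightarrow> nat \<Rightarrow> bool" where
  "contains_pattern a i j \<longleftrightarrow> (\<exists>t. Suc t < length a \<and> a ! t = i \<and> a ! Suc t = j)"

definition d_set :: "nat \<Rightarrow> nat list set" where
  "d_set n = {a. linear_arrangement n a \<and>
                 (\<forall>i\<in>{1..<n}. \<not> contains_pattern a i (Suc i))}"

definition arr_class :: "nat list set \<Rightarrow> nat \<Rightarrow> nat list set" where
  "arr_class X i = {a \<in> X. a \<noteq> [] \<and> hd a = i}"

definition equidistributed :: "nat \<Rightarrow> nat list set \<Rightarrow> bool" where
  "equidistributed n X \<longleftrightarrow>
     X = (\<Union>i\<in>{1..n}. arr_class X i) \<and>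
     (\<forall>i\<in>{1..n}. \<forall>j\<in>{1..n}. arr_class X i \<noteq> {} \<longrightarrow> arr_class X j \<noteq> {} \<longrightarrow>
        card (arr_class X i) = card (arr_class X j))"

end

theory Submission
  imports Defs
begin

text \<open>Deleting the leading 1 of an arrangement in the class of 1, lowering the remaining entries
  by one and prefixing n maps the class of 1 injectively into the class of n: lowering preserves
  the forbidden patterns i(i+1), and n cannot start one. For n > 3 the map misses
  n, 1, n-1, n-2, \<dots>, 2, whose preimage would begin with 1, 2. Both classes are nonempty, so
  they have different sizes.\<close>

lemma finite_d_set: "finite (d_set n)"
proof (rule finite_subset)
  show "d_set n \<subseteq> {a. set a \<subseteq> {1..n} \<and> length a = n}"
    by (auto simp: d_set_def linear_arrangement_def distinct_card[symmetric])
  show "finite {a. set a \<subseteq> {1..n} \<and> length a = n}"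
    by (rule finite_lists_length_eq) simp
qed

lemma contains_pattern_in_set:
  "contains_pattern w i j \<Longrightarrow> i \<in> set w \<and> j \<in> set w"
  unfolding contains_pattern_def by auto

lemma contains_pattern_Cons:
  "contains_pattern (x # w) i j \<longleftrightarrow> (w \<noteq> [] \<and> x = i \<and> hd w = j) \<or> contains_pattern w i j"
proof
  assume "contains_pattern (x # w) i j"
  then obtain t where "Suc t < length (x # w)" "(x # w) ! t = i" "(x # w) ! Suc t = j"
    unfolding contains_pattern_def by blast
  then show "(w \<noteq> [] \<and> x = i \<and> hd w = j) \<or> contains_pattern w i j"
    unfolding contains_pattern_def by (cases t) (auto simp: hd_conv_nth)
next
  have "contains_pattern (x # w) i j" if "w \<noteq> []" "x = i" "hd w = j"
    unfolding contains_pattern_def using that by (intro exI[of _ 0]) (auto simp: hd_conv_nth)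
  moreover have "contains_pattern (x # w) i j" if "contains_pattern w i j"
    using that unfolding contains_pattern_def by (metis Suc_less_eq length_Cons nth_Cons_Suc)
  ultimately show "contains_pattern (x # w) i j"
    if "(w \<noteq> [] \<and> x = i \<and> hd w = j) \<or> contains_pattern w i j"
    using that by blast
qed

lemma contains_pattern_map:
  "contains_pattern (map f w) i j \<longleftrightarrow> (\<exists>x y. f x = i \<and> f y = j \<and> contains_pattern w x y)"
  unfolding contains_pattern_def by auto blast

lemma not_contains_pattern_if_decreasing:
  assumes "sorted_wrt (>) w" "i \<le> j"
  shows "\<not> contains_pattern w i j"
  using assms unfolding contains_pattern_def
  by (auto simp: sorted_wrt_iff_nth_less) (metis lessI leD)

lemma sorted_wrt_greater_rev_upt: "sorted_wrt (>) (rev [a..<b])"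
  by (simp add: sorted_wrt_rev)

definition shift_class_one :: "nat \<Rightarrow> nat list \<Rightarrow> nat list" where
  "shift_class_one n a = n # map (\<lambda>v. v - 1) (tl a)"

lemma arr_class_d_set_one_cases:
  assumes "a \<in> arr_class (d_set n) 1"
  obtains w where "a = 1 # w" "distinct w" "set w = {2..n}"
    "\<forall>i\<in>{1..<n}. \<not> contains_pattern (1 # w) i (Suc i)"
proof -
  obtain w where a: "a = 1 # w"
    using assms by (cases a) (auto simp: arr_class_def)
  with assms have lin: "distinct (1 # w)" "set (1 # w) = {1..n}"
    and avoids: "\<forall>i\<in>{1..<n}. \<not> contains_pattern (1 # w) i (Suc i)"
    unfolding arr_class_def d_set_def linear_arrangement_def by blast+
  have "set w = set (1 # w) - {1}" using lin(1) by auto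
  also have "\<dots> = {2..n}" unfolding lin(2) by auto
  finally show thesis using that a lin(1) avoids by simp
qed

lemma shift_class_one_mem:
  assumes "a \<in> arr_class (d_set n) 1"
  shows "shift_class_one n a \<in> arr_class (d_set n) n"
proof -
  obtain w where a: "a = 1 # w" and w: "distinct w" "set w = {2..n}"
    and avoids: "\<forall>i\<in>{1..<n}. \<not> contains_pattern (1 # w) i (Suc i)"
    using assms by (rule arr_class_d_set_one_cases)
  have "n \<ge> 1" using assms a by (auto simp: arr_class_def d_set_def linear_arrangement_def)
  have "(\<lambda>v. v - 1) ` {2..n} = {1..n - 1}"
    by (auto simp: image_iff intro!: bexI[of _ "Suc _"])
  with w \<open>n \<ge> 1\<close> have "linear_arrangement n (n # map (\<lambda>v. v - 1) w)"
    by (auto simp: linear_arrangement_def distinct_map inj_on_def)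
  moreover have "\<not> contains_pattern (map (\<lambda>v. v - 1) w) i (Suc i)" if "i \<in> {1..<n}" for i
  proof
    assume "contains_pattern (map (\<lambda>v. v - 1) w) i (Suc i)"
    then obtain x y where "x - 1 = i" "y - 1 = Suc i" and xy: "contains_pattern w x y"
      by (auto simp: contains_pattern_map)
    moreover from xy w have "x \<ge> 2" "y \<le> n"
      by (auto dest!: contains_pattern_in_set)
    ultimately have "contains_pattern (1 # w) (Suc i) (Suc (Suc i))" "Suc i \<in> {1..<n}"
      by (auto simp: contains_pattern_Cons)
    with avoids show False by blast
  qed
  ultimately show ?thesis
    by (auto simp: shift_class_one_def a arr_class_def d_set_def contains_pattern_Cons)
qed

lemma inj_on_shift_class_one: "inj_on (shift_class_one n) (arr_class (d_set n) 1)"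
proof (rule inj_onI)
  fix a b assume "a \<in> arr_class (d_set n) 1" "b \<in> arr_class (d_set n) 1"
    and eq: "shift_class_one n a = shift_class_one n b"
  then obtain w u where "a = 1 # w" "set w = {2..n}" "b = 1 # u" "set u = {2..n}"
    by (metis arr_class_d_set_one_cases)
  moreover have "inj_on (\<lambda>v. v - 1) {2..n}" by (auto simp: inj_on_def)
  ultimately show "a = b"
    using eq by (simp add: shift_class_one_def inj_on_map_eq_map)
qed

lemma shift_class_one_second_entry:
  assumes "a \<in> arr_class (d_set n) 1" "n \<ge> 2"
  shows "shift_class_one n a ! 1 \<noteq> 1"
proof -
  obtain w where a: "a = 1 # w" and w: "set w = {2..n}"
    and avoids: "\<forall>i\<in>{1..<n}. \<not> contains_pattern (1 # w) i (Suc i)"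
    using assms(1) by (rule arr_class_d_set_one_cases)
  from w assms(2) have "w \<noteq> []" by auto
  with w have "hd w \<ge> 2" using hd_in_set by fastforce
  moreover have "\<not> contains_pattern (1 # w) 1 2"
    using avoids assms(2) by (auto simp: numeral_2_eq_2)
  with \<open>w \<noteq> []\<close> have "hd w \<noteq> 2" by (simp add: contains_pattern_Cons)
  ultimately show ?thesis
    using \<open>w \<noteq> []\<close> by (cases w) (simp_all add: shift_class_one_def a)
qed

lemma one_decreasing_mem_arr_class_one:
  assumes "n \<ge> 3"
  shows "1 # rev [2..<Suc n] \<in> arr_class (d_set n) 1"
  using assms
  by (auto simp: arr_class_def d_set_def linear_arrangement_def contains_pattern_Cons
      hd_rev not_contains_pattern_if_decreasing sorted_wrt_greater_rev_upt)

lemma top_one_decreasing_mem_arr_class_top: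
  assumes "n \<ge> 4"
  shows "n # 1 # rev [2..<n] \<in> arr_class (d_set n) n"
  using assms
  by (auto simp: arr_class_def d_set_def linear_arrangement_def contains_pattern_Cons
      hd_rev not_contains_pattern_if_decreasing sorted_wrt_greater_rev_upt)

lemma card_arr_class_one_less:
  assumes "n > 3"
  shows "card (arr_class (d_set n) 1) < card (arr_class (d_set n) n)"
proof -
  let ?C1 = "arr_class (d_set n) 1" and ?Cn = "arr_class (d_set n) n"
  let ?missed = "n # 1 # rev [2..<n]"
  have "?missed \<notin> shift_class_one n ` ?C1"
  proof
    assume "?missed \<in> shift_class_one n ` ?C1"
    then obtain a where a: "a \<in> ?C1" and eq: "shift_class_one n a = ?missed"
      by (rule imageE) simp
    from a assms have "shift_class_one n a ! 1 \<noteq> 1"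
      by (intro shift_class_one_second_entry) simp_all
    with eq show False by simp
  qed
  moreover have "?missed \<in> ?Cn"
    using assms by (intro top_one_decreasing_mem_arr_class_top) simp
  moreover have "shift_class_one n ` ?C1 \<subseteq> ?Cn"
    using shift_class_one_mem by (rule image_subsetI)
  ultimately have psub: "shift_class_one n ` ?C1 \<subset> ?Cn" by blast
  have "finite ?Cn" using finite_d_set by (simp add: arr_class_def)
  with psub have "card (shift_class_one n ` ?C1) < card ?Cn"
    by (rule psubset_card_mono[rotated])
  then show ?thesis by (simp only: card_image[OF inj_on_shift_class_one])
qed

theorem proposition4p11:
  fixes n :: nat
  assumes "n > 3"
  shows "\<not> equidistributed n (d_set n)"
proof
  assume "equidistributed n (d_set n)"
  moreover have "1 \<in> {1..n}" "n \<in> {1..n}" using assms by auto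
  moreover have "arr_class (d_set n) 1 \<noteq> {}" "arr_class (d_set n) n \<noteq> {}"
    using one_decreasing_mem_arr_class_one[of n] top_one_decreasing_mem_arr_class_top[of n] assms
    by auto
  ultimately have "card (arr_class (d_set n) 1) = card (arr_class (d_set n) n)"
    unfolding equidistributed_def by blast
  with card_arr_class_one_less[OF assms] show False by simp
qed

end
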